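(* Define $P,H\in I(\mathcal{S})$ by $P(\sigma,\pi)=\binom{\pi}{\sigma}$ and $H(\sigma,\pi)=\binom{\pi}{\sigma}\eta(\sigma,\pi)$. Then $P=e^H=\sum_{\ell\ge0}H^\ell/\ell!$ (each entry being a finite sum).
   Context: $\mathcal{S}_n$ is the set of permutations of $[n]$ (written as words $\pi(1)\cdots\pi(n)$), and $\mathcal{S}=\bigcup_{n\ge0}\mathcal{S}_n$ (including the empty permutation); $|\pi|$ is the length. Two integer sequences $a_1\cdots a_k$, $b_1\cdots b_k$ are order-isomorphic if $a_i<a_j\iff b_i<b_j$ for all $i,j$. For $\sigma\in\mathcal{S}_k$, $\pi\in\mathcal{S}_n$, $\binom{\pi}{\sigma}$ is the number of order-preserving injections $\varphi:[k]\to[n]$ such that $\pi(\varphi(1))\cdots\pi(\varphi(k))$ is order-isomorphic to $\sigma$. $\mathcal{S}$ is partially ordered by $\sigma\le\pi$ iff $\binom{\pi}{\sigma}>0$. $I(\mathcal{S})$ is the incidence algebra over $\mathbb{Q}$: functions on pairs $(x,y)$ with $x\le y$, convolution $(FG)(x,y)=\sum_{x\le z\le y}F(x,z)G(z,y)$, identity $\delta(x,y)=[x=y]$ (Iverson bracket). $\eta(x,y)=[y\text{ covers }x]$; here $\pi$ covers $\sigma$ iff $\sigma\le\pi$ and $|\pi|=|\sigma|+1$. *)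

theory Defs
  imports Complex_Main "HOL-Library.FuncSet"
begin

definition perms :: "nat list set" where
  "perms = {xs. distinct xs \<and> set xs = {1..length xs}}"

definition order_iso :: "nat list \<Rightarrow> nat list \<Rightarrow> bool" where
  "order_iso a b \<longleftrightarrow> length a = length b \<and>
     (\<forall>i<length a. \<forall>j<length a. (a ! i < a ! j) \<longleftrightarrow> (b ! i < b ! j))"

text \<open>Pattern count binom(w, s): number of order-preserving injections
  phi : [k] -> [n] with w(phi(1))...w(phi(k)) order-isomorphic to s.
  Lists are 0-indexed, so w(j) is w ! (j - 1).\<close>
definition pcount :: "nat list \<Rightarrow> nat list \<Rightarrow> nat" where
  "pcount w s = card {phi \<in> {1..length s} \<rightarrow>\<^sub>E {1..length w}.
      strict_mono_on {1..length s} phi \<and>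
      order_iso (map (\<lambda>i. w ! (phi i - 1)) [1..<length s + 1]) s}"

definition pleq :: "nat list \<Rightarrow> nat list \<Rightarrow> bool" where
  "pleq s w \<longleftrightarrow> s \<in> perms \<and> w \<in> perms \<and> pcount w s > 0"

definition covers :: "nat list \<Rightarrow> nat list \<Rightarrow> bool" where
  "covers s w \<longleftrightarrow> pleq s w \<and> length w = length s + 1"

text \<open>Incidence algebra over Q: elements are functions on pairs, only their values
  on pairs x \<le> y matter.\<close>
definition iconv :: "(nat list \<Rightarrow> nat list \<Rightarrow> rat) \<Rightarrow> (nat list \<Rightarrow> nat list \<Rightarrow> rat)
    \<Rightarrow> nat list \<Rightarrow> nat list \<Rightarrow> rat" where
  "iconv F G x y = (\<Sum>z\<in>{z. pleq x z \<and> pleq z y}. F x z * G z y)"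

definition idelta :: "nat list \<Rightarrow> nat list \<Rightarrow> rat" where
  "idelta x y = (if x = y then 1 else 0)"

fun ipow :: "(nat list \<Rightarrow> nat list \<Rightarrow> rat) \<Rightarrow> nat \<Rightarrow> nat list \<Rightarrow> nat list \<Rightarrow> rat" where
  "ipow F 0 = idelta"
| "ipow F (Suc n) = iconv (ipow F n) F"

definition ieta :: "nat list \<Rightarrow> nat list \<Rightarrow> rat" where
  "ieta x y = (if covers x y then 1 else 0)"

definition Pfun :: "nat list \<Rightarrow> nat list \<Rightarrow> rat" where
  "Pfun s w = of_nat (pcount w s)"

definition Hfun :: "nat list \<Rightarrow> nat list \<Rightarrow> rat" where
  "Hfun s w = of_nat (pcount w s) * ieta s w"

end

(*
  An occurrence of sigma in pi is a set of positions of pi, and binom(pi, sigma) counts these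
  sets.  If |pi| = m + 1, every m-set A of positions of pi is an occurrence of exactly one
  permutation z of length m, namely the order type of the restriction of pi to A.  Hence
  sum_{|z| = m} binom(z, sigma) binom(pi, z) = sum_A binom(pi|A, sigma), and counting the
  pairs (C, A) of an occurrence C of sigma and an m-set A containing C gives
  (m + 1 - |sigma|) binom(pi, sigma).
  Since H only connects adjacent levels, induction on l yields H^l(sigma, pi) = l! binom(pi, sigma)
  when |pi| = |sigma| + l and 0 otherwise, so exactly one term of e^H is nonzero at (sigma, pi),
  and it equals binom(pi, sigma).
*)
theory Submission
  imports Defs
begin

(* Keeps the index lists [1..<k+1] of Defs intact instead of unfolding them into appends. *)
declare upt_Suc[simp del]

section \<open>Order isomorphism and subwords\<close>

lemma order_iso_refl: "order_iso a a"
  by (simp add: order_iso_def)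

lemma order_iso_sym: "order_iso a b \<Longrightarrow> order_iso b a"
  by (simp add: order_iso_def)

lemma order_iso_trans: "order_iso a b \<Longrightarrow> order_iso b c \<Longrightarrow> order_iso a c"
  by (simp add: order_iso_def)

lemma order_iso_map_nth:
  assumes "order_iso a b" "set xs \<subseteq> {..<length a}"
  shows "order_iso (map ((!) a) xs) (map ((!) b) xs)"
  using assms unfolding order_iso_def by (auto simp: subset_iff)

lemma order_iso_distinct:
  assumes "order_iso a b" "distinct a"
  shows "distinct b"
  unfolding distinct_conv_nth
proof (intro allI impI)
  fix i j assume ij: "i < length b" "j < length b" "i \<noteq> j"
  show "b ! i \<noteq> b ! j"
  proof
    assume "b ! i = b ! j"
    with assms(1) ij have "\<not> a ! i < a ! j" "\<not> a ! j < a ! i" by (auto simp: order_iso_def)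
    then have "a ! i = a ! j" by simp
    with assms ij show False by (simp add: order_iso_def nth_eq_iff_index_eq)
  qed
qed

lemma sorted_list_of_set_strict_sorted:
  "sorted_wrt (<) xs \<Longrightarrow> sorted_list_of_set (set xs) = (xs :: 'a::linorder list)"
  by (simp add: sorted_list_of_set_sort_remdups strict_sorted_iff distinct_remdups_id sorted_sort_id)

definition subword :: "nat list \<Rightarrow> nat set \<Rightarrow> nat list" where
  "subword w C = map ((!) w) (sorted_list_of_set C)"

lemma length_subword: "finite C \<Longrightarrow> length (subword w C) = card C"
  by (simp add: subword_def)

lemma subword_lessThan_length: "subword w {..<length w} = w"
  by (simp add: subword_def lessThan_atLeast0 map_nth)

lemma order_iso_subword:
  assumes "order_iso a b" "C \<subseteq> {..<length a}"
  shows "order_iso (subword a C) (subword b C)"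
proof -
  have "finite C" using assms(2) finite_subset by blast
  then show ?thesis
    unfolding subword_def by (intro order_iso_map_nth) (use assms in auto)
qed

lemma distinct_subword:
  assumes "distinct w" "A \<subseteq> {..<length w}"
  shows "distinct (subword w A)"
proof -
  have "finite A" using assms(2) finite_subset by blast
  then have "inj_on ((!) w) (set (sorted_list_of_set A))"
    using assms by (intro inj_on_nth) auto
  then show ?thesis by (simp add: subword_def distinct_map)
qed

lemma subword_subword:
  assumes "finite A" "B \<subseteq> {..<card A}"
  shows "subword (subword w A) B = subword w ((!) (sorted_list_of_set A) ` B)"
proof -
  let ?LA = "sorted_list_of_set A" and ?LB = "sorted_list_of_set B"
  have fB: "finite B" using assms(2) finite_subset by blast
  have "sorted_wrt (<) (map ((!) ?LA) ?LB)"
    unfolding sorted_wrt_map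
  proof (rule sorted_wrt_mono_rel[OF _ sorted_list_of_set.strict_sorted_key_list_of_set])
    fix x y assume xy: "x \<in> set ?LB" "y \<in> set ?LB" "x < y"
    then have "y < length ?LA" using fB assms by auto
    with xy(3) show "?LA ! x < ?LA ! y"
      using sorted_wrt_nth_less[of "(<)" ?LA] by simp
  qed
  then have "sorted_list_of_set ((!) ?LA ` B) = map ((!) ?LA) ?LB"
    using sorted_list_of_set_strict_sorted fB by fastforce
  moreover have "\<forall>i\<in>set ?LB. i < length ?LA"
    using assms fB by auto
  ultimately show ?thesis by (simp add: subword_def)
qed

section \<open>Occurrences of a pattern\<close>

definition occurrences :: "nat list \<Rightarrow> nat list \<Rightarrow> nat set set" where
  "occurrences w s = {C. C \<subseteq> {..<length w} \<and> card C = length s \<and> order_iso (subword w C) s}"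

lemma finite_occurrences: "finite (occurrences w s)"
  by (rule finite_subset[of _ "Pow {..<length w}"]) (auto simp: occurrences_def)

lemma sorted_list_of_set_shifted_image:
  fixes phi :: "nat \<Rightarrow> nat"
  assumes "strict_mono_on {1..k} phi" "\<forall>i\<in>{1..k}. phi i \<ge> 1"
  shows "sorted_list_of_set ((\<lambda>i. phi i - 1) ` {1..k}) = map (\<lambda>i. phi i - 1) [1..<k+1]"
proof -
  have "sorted_wrt (<) (map (\<lambda>i. phi i - 1) [1..<k+1])"
    unfolding sorted_wrt_map
  proof (rule sorted_wrt_mono_rel[OF _ sorted_wrt_upt])
    fix i j assume "i \<in> set [1..<k+1]" "j \<in> set [1..<k+1]" "i < j"
    then show "phi i - 1 < phi j - 1"
      using assms by (auto simp: strict_mono_on_def intro!: diff_less_mono)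
  qed
  then show ?thesis
    using sorted_list_of_set_strict_sorted by (fastforce simp: atLeastLessThanSuc_atLeastAtMost)
qed

lemma restrict_sorted_list_of_set_shifted_image:
  fixes phi :: "nat \<Rightarrow> nat"
  assumes "phi \<in> {1..k} \<rightarrow>\<^sub>E {1..n}" "strict_mono_on {1..k} phi"
  shows "(\<lambda>i\<in>{1..k}. sorted_list_of_set ((\<lambda>i. phi i - 1) ` {1..k}) ! (i - 1) + 1) = phi"
proof
  fix i
  have ge: "\<forall>i\<in>{1..k}. phi i \<ge> 1" using assms(1) by auto
  with assms(2) have L: "sorted_list_of_set ((\<lambda>i. phi i - 1) ` {1..k}) = map (\<lambda>i. phi i - 1) [1..<k+1]"
    by (rule sorted_list_of_set_shifted_image)
  show "(\<lambda>i\<in>{1..k}. sorted_list_of_set ((\<lambda>i. phi i - 1) ` {1..k}) ! (i - 1) + 1) i = phi i"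
  proof (cases "i \<in> {1..k}")
    case True
    have "phi i \<ge> 1" using ge True by blast
    moreover have "sorted_list_of_set ((\<lambda>i. phi i - 1) ` {1..k}) ! (i - 1) = phi i - 1"
      using True unfolding L by (subst nth_map_upt) auto
    ultimately show ?thesis using True by simp
  next
    case False
    with assms(1) have "phi i = undefined" by (blast intro: PiE_arb)
    with False show ?thesis by auto
  qed
qed

lemma image_nth_sorted_list_of_set_shifted:
  assumes "finite C"
  shows "(\<lambda>i. sorted_list_of_set C ! (i - 1)) ` {1..card C} = C"
proof -
  have "(\<lambda>i. i - 1) ` {1..card C} = {..<card C}"
    unfolding image_Suc_lessThan[symmetric] by (simp add: image_image)
  then have "(\<lambda>i. sorted_list_of_set C ! (i - 1)) ` {1..card C} = (!) (sorted_list_of_set C) ` {..<card C}"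
    by (metis image_image)
  also have "\<dots> = C"
    using assms nth_image[of "card C" "sorted_list_of_set C"] by (simp add: lessThan_atLeast0)
  finally show ?thesis .
qed

(* An order-preserving injection phi : [k] -> [n] is determined by its image; the shift by one
   turns the 1-based positions of pcount into 0-based list indices. *)
lemma bij_betw_strict_mono_subsets:
  "bij_betw (\<lambda>phi :: nat \<Rightarrow> nat. (\<lambda>i. phi i - 1) ` {1..k})
     {phi \<in> {1..k} \<rightarrow>\<^sub>E {1..n}. strict_mono_on {1..k} phi} {C. C \<subseteq> {..<n} \<and> card C = k}"
    (is "bij_betw ?f ?M ?S")
proof -
  let ?g = "\<lambda>C. \<lambda>i\<in>{1..k}. sorted_list_of_set C ! (i - 1) + 1"
  have left: "\<forall>phi\<in>?M. ?g (?f phi) = phi"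
    using restrict_sorted_list_of_set_shifted_image by blast
  have right: "\<forall>C\<in>?S. ?f (?g C) = C"
  proof
    fix C assume C: "C \<in> ?S"
    then have "?f (?g C) = (\<lambda>i. sorted_list_of_set C ! (i - 1)) ` {1..card C}"
      by (intro image_cong) auto
    also have "\<dots> = C"
      using C finite_subset by (intro image_nth_sorted_list_of_set_shifted) auto
    finally show "?f (?g C) = C" .
  qed
  have "?f ` ?M \<subseteq> ?S"
  proof
    fix C assume "C \<in> ?f ` ?M"
    then obtain phi where phi: "phi \<in> ?M" "C = ?f phi" by blast
    have "sorted_list_of_set C = map (\<lambda>i. phi i - 1) [1..<k+1]"
      unfolding phi(2) using phi(1) by (intro sorted_list_of_set_shifted_image) auto
    then have "card C = k"
      by (metis length_sorted_list_of_set length_map length_upt diff_add_inverse2)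
    moreover have "C \<subseteq> {..<n}" using phi by (auto simp: PiE_iff Suc_le_eq)
    ultimately show "C \<in> ?S" by simp
  qed
  moreover have "?g ` ?S \<subseteq> ?M"
  proof
    fix phi assume "phi \<in> ?g ` ?S"
    then obtain C where C: "C \<in> ?S" "phi = ?g C" by blast
    have fin: "finite C" using C finite_subset by blast
    have "sorted_list_of_set C ! j < n" if "j < k" for j
      using C fin that nth_mem[of j "sorted_list_of_set C"] by auto
    then have "phi \<in> {1..k} \<rightarrow>\<^sub>E {1..n}" using C by (auto simp: Suc_le_eq)
    moreover have "strict_mono_on {1..k} phi"
    proof (rule strict_mono_onI)
      fix i j assume ij: "i \<in> {1..k}" "j \<in> {1..k}" "i < j"
      then have "j - 1 < length (sorted_list_of_set C)" using C by auto
      with ij have "sorted_list_of_set C ! (i - 1) < sorted_list_of_set C ! (j - 1)"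
        using sorted_wrt_nth_less[of "(<)" "sorted_list_of_set C"] by simp
      with ij C show "phi i < phi j" by simp
    qed
    ultimately show "phi \<in> ?M" by blast
  qed
  ultimately show ?thesis by (rule bij_betw_byWitness[of ?M ?g ?f ?S, OF left right])
qed

lemma subword_shifted_image:
  assumes "phi \<in> {1..k} \<rightarrow>\<^sub>E {1..n}" "strict_mono_on {1..k} phi"
  shows "subword w ((\<lambda>i. phi i - 1) ` {1..k}) = map (\<lambda>i. w ! (phi i - 1)) [1..<k+1]"
proof -
  have "\<forall>i\<in>{1..k}. phi i \<ge> 1" using assms(1) by auto
  with assms(2) have "sorted_list_of_set ((\<lambda>i. phi i - 1) ` {1..k}) = map (\<lambda>i. phi i - 1) [1..<k+1]"
    by (rule sorted_list_of_set_shifted_image)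
  then show ?thesis by (simp add: subword_def)
qed

lemma pcount_eq_card_occurrences: "pcount w s = card (occurrences w s)"
proof -
  let ?k = "length s" and ?n = "length w"
  let ?f = "\<lambda>phi :: nat \<Rightarrow> nat. (\<lambda>i. phi i - 1) ` {1..?k}"
  let ?M = "{phi \<in> {1..?k} \<rightarrow>\<^sub>E {1..?n}. strict_mono_on {1..?k} phi}"
  let ?S = "{C. C \<subseteq> {..<?n} \<and> card C = ?k}"
  have bij: "bij_betw ?f ?M ?S"
    by (rule bij_betw_strict_mono_subsets)
  have "subword w (?f phi) = map (\<lambda>i. w ! (phi i - 1)) [1..<?k + 1]" if "phi \<in> ?M" for phi
    using that by (intro subword_shifted_image) auto
  then have P: "{phi \<in> {1..?k} \<rightarrow>\<^sub>E {1..?n}. strict_mono_on {1..?k} phi \<and>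
      order_iso (map (\<lambda>i. w ! (phi i - 1)) [1..<?k + 1]) s}
    = {phi \<in> ?M. order_iso (subword w (?f phi)) s}"
    by auto
  have "?f ` {phi \<in> ?M. order_iso (subword w (?f phi)) s} = {C \<in> ?S. order_iso (subword w C) s}"
    unfolding bij_betw_imp_surj_on[OF bij, symmetric] by (rule Compr_image_eq[symmetric])
  also have "\<dots> = occurrences w s"
    by (auto simp: occurrences_def)
  finally have "bij_betw ?f {phi \<in> ?M. order_iso (subword w (?f phi)) s} (occurrences w s)"
    by (rule bij_betw_subset[OF bij, rotated]) blast
  then show ?thesis
    unfolding pcount_def P by (rule bij_betw_same_card)
qed

lemma pcount_pos_imp_length_le:
  assumes "pcount w s > 0"
  shows "length s \<le> length w"
proof -
  have "occurrences w s \<noteq> {}"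
    using assms by (auto simp: pcount_eq_card_occurrences)
  then obtain C where "C \<subseteq> {..<length w}" "card C = length s"
    by (auto simp: occurrences_def)
  then show ?thesis by (metis card_lessThan card_mono finite_lessThan)
qed

lemma pcount_order_iso_cong:
  assumes "order_iso a b"
  shows "pcount a s = pcount b s"
proof -
  have "order_iso (subword a C) s \<longleftrightarrow> order_iso (subword b C) s" if "C \<subseteq> {..<length a}" for C
    using order_iso_subword[OF assms that] order_iso_sym order_iso_trans by blast
  moreover have "length a = length b" using assms by (simp add: order_iso_def)
  ultimately have "occurrences a s = occurrences b s"
    unfolding occurrences_def by auto
  then show ?thesis by (simp add: pcount_eq_card_occurrences)
qed

lemma occurrences_same_length:
  assumes "length s = length w"
  shows "occurrences w s = (if order_iso w s then {{..<length w}} else {})"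
proof -
  have "C \<in> occurrences w s \<longleftrightarrow> C = {..<length w} \<and> order_iso w s" for C
  proof
    assume "C \<in> occurrences w s"
    then have C: "C \<subseteq> {..<length w}" "card C = length w" "order_iso (subword w C) s"
      using assms by (auto simp: occurrences_def)
    then have "C = {..<length w}" by (intro card_subset_eq) auto
    with C show "C = {..<length w} \<and> order_iso w s" by (simp add: subword_lessThan_length)
  next
    assume "C = {..<length w} \<and> order_iso w s"
    then show "C \<in> occurrences w s"
      using assms by (simp add: occurrences_def subword_lessThan_length)
  qed
  then show ?thesis by auto
qed

lemma pcount_subword:
  assumes "A \<subseteq> {..<length w}"
  shows "pcount (subword w A) s = card {C \<in> occurrences w s. C \<subseteq> A}"
proof -
  have fA: "finite A" using assms finite_subset by blast
  let ?f = "(!) (sorted_list_of_set A)"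
  have bij: "bij_betw (image ?f) (Pow {..<card A}) (Pow A)"
    by (rule bij_betw_Pow, rule bij_betw_nth) (use fA in auto)
  have occ: "?f ` B \<in> occurrences w s \<longleftrightarrow> B \<in> occurrences (subword w A) s"
    if B: "B \<subseteq> {..<card A}" for B
  proof -
    have "card (?f ` B) = card B"
      using B bij_betw_imp_inj_on[OF bij_betw_nth[of "sorted_list_of_set A"]] fA
      by (intro card_image) (auto intro: inj_on_subset)
    moreover have "?f ` B \<subseteq> {..<length w}"
      using bij_betw_apply[OF bij, of B] B assms by auto
    ultimately show ?thesis
      using B subword_subword[OF fA B] by (simp add: occurrences_def length_subword fA)
  qed
  have occ_Pow: "occurrences (subword w A) s \<subseteq> Pow {..<card A}"
    by (auto simp: occurrences_def length_subword fA)
  have "image ?f ` occurrences (subword w A) s = {C \<in> occurrences w s. C \<subseteq> A}"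
  proof
    show "image ?f ` occurrences (subword w A) s \<subseteq> {C \<in> occurrences w s. C \<subseteq> A}"
      using occ occ_Pow bij_betw_apply[OF bij] by blast
    show "{C \<in> occurrences w s. C \<subseteq> A} \<subseteq> image ?f ` occurrences (subword w A) s"
    proof
      fix C assume C: "C \<in> {C \<in> occurrences w s. C \<subseteq> A}"
      then obtain B where "B \<subseteq> {..<card A}" "C = ?f ` B"
        using bij_betw_imp_surj_on[OF bij] by (metis (no_types, lifting) PowD PowI imageE mem_Collect_eq)
      with C occ show "C \<in> image ?f ` occurrences (subword w A) s" by blast
    qed
  qed
  moreover have "inj_on (image ?f) (occurrences (subword w A) s)"
    using bij_betw_imp_inj_on[OF bij] occ_Pow by (rule inj_on_subset)
  ultimately show ?thesis
    by (metis card_image pcount_eq_card_occurrences)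
qed

section \<open>Permutations as order types\<close>

definition standardize :: "nat list \<Rightarrow> nat list" where
  "standardize xs = map (\<lambda>x. card {y \<in> set xs. y \<le> x}) xs"

lemma nth_standardize:
  assumes "distinct xs" "i < length xs"
  shows "standardize xs ! i = card {j. j < length xs \<and> xs ! j \<le> xs ! i}"
proof -
  have "{y \<in> set xs. y \<le> xs ! i} = (!) xs ` {j. j < length xs \<and> xs ! j \<le> xs ! i}"
    by (auto simp: in_set_conv_nth)
  moreover have "inj_on ((!) xs) {j. j < length xs \<and> xs ! j \<le> xs ! i}"
    using assms(1) by (auto simp: inj_on_def nth_eq_iff_index_eq)
  ultimately show ?thesis
    using assms(2) by (simp add: standardize_def card_image)
qed

lemma standardize_order_iso_cong:
  assumes "order_iso a b" "distinct a" "distinct b"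
  shows "standardize a = standardize b"
proof (rule nth_equalityI)
  show "length (standardize a) = length (standardize b)"
    using assms(1) by (simp add: standardize_def order_iso_def)
  fix i assume "i < length (standardize a)"
  then have i: "i < length a" "i < length b"
    using assms(1) by (simp_all add: standardize_def order_iso_def)
  have "{j. j < length a \<and> a ! j \<le> a ! i} = {j. j < length b \<and> b ! j \<le> b ! i}"
    using assms(1) i unfolding order_iso_def by (auto simp: not_less[symmetric])
  then show "standardize a ! i = standardize b ! i"
    by (simp add: nth_standardize[OF assms(2) i(1)] nth_standardize[OF assms(3) i(2)])
qed

lemma standardize_perm: "z \<in> perms \<Longrightarrow> standardize z = z"
proof -
  assume "z \<in> perms"
  then have "set z = {1..length z}" by (simp add: perms_def)
  then have "{y \<in> set z. y \<le> x} = {1..x}" if "x \<in> set z" for x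
    using that by auto
  then have "card {y \<in> set z. y \<le> x} = x" if "x \<in> set z" for x
    using that by simp
  then show ?thesis by (simp add: standardize_def map_idI)
qed

lemma perms_order_iso_imp_eq:
  assumes "z \<in> perms" "z' \<in> perms" "order_iso z z'"
  shows "z = z'"
  using standardize_order_iso_cong[OF assms(3)] standardize_perm assms by (simp add: perms_def)

lemma order_iso_standardize: "order_iso xs (standardize xs)"
  unfolding order_iso_def
proof (intro conjI allI impI)
  show "length xs = length (standardize xs)" by (simp add: standardize_def)
  fix i j assume ij: "i < length xs" "j < length xs"
  have "card {u \<in> set xs. u \<le> xs ! i} < card {u \<in> set xs. u \<le> xs ! j}" if "xs ! i < xs ! j"
  proof (rule psubset_card_mono)
    have "xs ! j \<in> {u \<in> set xs. u \<le> xs ! j}" "xs ! j \<notin> {u \<in> set xs. u \<le> xs ! i}"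
      using that ij by auto
    moreover have "{u \<in> set xs. u \<le> xs ! i} \<subseteq> {u \<in> set xs. u \<le> xs ! j}"
      using that by auto
    ultimately show "{u \<in> set xs. u \<le> xs ! i} \<subset> {u \<in> set xs. u \<le> xs ! j}"
      by blast
  qed simp
  moreover have "card {u \<in> set xs. u \<le> xs ! j} \<le> card {u \<in> set xs. u \<le> xs ! i}" if "xs ! j \<le> xs ! i"
    using that by (intro card_mono) auto
  ultimately show "xs ! i < xs ! j \<longleftrightarrow> standardize xs ! i < standardize xs ! j"
    using ij by (auto simp: standardize_def not_less[symmetric])
qed

lemma standardize_in_perms:
  assumes "distinct xs"
  shows "standardize xs \<in> perms"
proof -
  have dist: "distinct (standardize xs)"
    using order_iso_distinct[OF order_iso_standardize assms] .
  have "set (standardize xs) \<subseteq> {1..length xs}"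
  proof
    fix v assume "v \<in> set (standardize xs)"
    then obtain x where x: "x \<in> set xs" "v = card {y \<in> set xs. y \<le> x}"
      by (auto simp: standardize_def)
    then have "v \<le> card (set xs)" by (auto intro: card_mono)
    moreover have "v \<ge> 1" using x by (auto simp: Suc_le_eq card_gt_0_iff)
    ultimately show "v \<in> {1..length xs}" using assms by (simp add: distinct_card)
  qed
  moreover have "card (set (standardize xs)) = length xs"
    using distinct_card[OF dist] by (simp only: standardize_def length_map)
  ultimately have "set (standardize xs) = {1..length xs}"
    by (intro card_subset_eq) auto
  with dist show ?thesis by (simp add: perms_def standardize_def)
qed

lemma card_perms_order_iso:
  assumes "distinct xs"
  shows "card {z \<in> perms. order_iso xs z} = 1"
proof -
  have "{z \<in> perms. order_iso xs z} = {standardize xs}"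
    using standardize_in_perms[OF assms] order_iso_standardize
      perms_order_iso_imp_eq order_iso_sym order_iso_trans by blast
  then show ?thesis by simp
qed

lemma finite_perms_length_le: "finite {z \<in> perms. length z \<le> N}"
proof (rule finite_subset)
  show "{z \<in> perms. length z \<le> N} \<subseteq> {xs. set xs \<subseteq> {..N} \<and> length xs \<le> N}"
    by (auto simp: perms_def)
  show "finite {xs. set xs \<subseteq> {..N} \<and> length xs \<le> N}"
    by (rule finite_lists_length_le) simp
qed

lemma finite_perms_length_eq: "finite {z \<in> perms. length z = N}"
  by (rule finite_subset[OF _ finite_perms_length_le[of N]]) auto

lemma pcount_same_length_perms:
  assumes "s \<in> perms" "w \<in> perms" "length s = length w"
  shows "pcount w s = (if s = w then 1 else 0)"
  using occurrences_same_length[OF assms(3)] perms_order_iso_imp_eq[OF assms(2,1)] order_iso_refl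
  by (auto simp: pcount_eq_card_occurrences)

section \<open>Counting occurrences through the level below\<close>

lemma card_supersets_card_minus_one:
  assumes "finite U" "U \<noteq> {}" "C \<subseteq> U"
  shows "card {A. A \<subseteq> U \<and> card A = card U - 1 \<and> C \<subseteq> A} = card U - card C"
proof -
  have "card U > 0" using assms(1,2) by (simp add: card_gt_0_iff)
  have "bij_betw (\<lambda>j. U - {j}) (U - C) {A. A \<subseteq> U \<and> card A = card U - 1 \<and> C \<subseteq> A}"
  proof (rule bij_betw_imageI)
    show "inj_on (\<lambda>j. U - {j}) (U - C)" by (rule inj_onI) auto
    show "(\<lambda>j. U - {j}) ` (U - C) = {A. A \<subseteq> U \<and> card A = card U - 1 \<and> C \<subseteq> A}"
    proof
      show "(\<lambda>j. U - {j}) ` (U - C) \<subseteq> {A. A \<subseteq> U \<and> card A = card U - 1 \<and> C \<subseteq> A}"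
        using assms by auto
      show "{A. A \<subseteq> U \<and> card A = card U - 1 \<and> C \<subseteq> A} \<subseteq> (\<lambda>j. U - {j}) ` (U - C)"
      proof
        fix A assume A: "A \<in> {A. A \<subseteq> U \<and> card A = card U - 1 \<and> C \<subseteq> A}"
        then have "card (U - A) = 1"
          using assms \<open>card U > 0\<close> by (auto simp: card_Diff_subset finite_subset)
        then obtain j where j: "U - A = {j}" by (rule card_1_singletonE)
        with A have "A = U - {j}" "j \<in> U - C" by auto
        then show "A \<in> (\<lambda>j. U - {j}) ` (U - C)" by blast
      qed
    qed
  qed
  then have "card (U - C) = card {A. A \<subseteq> U \<and> card A = card U - 1 \<and> C \<subseteq> A}"
    by (rule bij_betw_same_card)
  with assms show ?thesis by (simp add: card_Diff_subset finite_subset)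
qed

lemma sum_if_card: "finite S \<Longrightarrow> (\<Sum>x\<in>S. if P x then c else 0) = of_nat (card {x \<in> S. P x}) * c"
  by (simp add: sum.If_cases Int_def conj_commute)

(* Each m-set A of positions of w is an occurrence of exactly one permutation z of length m,
   the standardization of subword w A. *)
lemma sum_pcount_perms_eq_sum_subwords:
  assumes "distinct w" "length w = m + 1"
  shows "(\<Sum>z\<in>{z \<in> perms. length z = m}. pcount z s * pcount w z)
       = (\<Sum>A\<in>{A. A \<subseteq> {..<m+1} \<and> card A = m}. pcount (subword w A) s)"
proof -
  let ?Z = "{z \<in> perms. length z = m}"
  let ?S = "{A. A \<subseteq> {..<m+1} \<and> card A = m}"
  let ?t = "\<lambda>A z. if order_iso (subword w A) z then pcount (subword w A) s else 0"
  have "pcount z s * pcount w z = (\<Sum>A\<in>?S. ?t A z)" if z: "z \<in> ?Z" for z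
  proof -
    have "occurrences w z = {A \<in> ?S. order_iso (subword w A) z}"
      using z assms(2) by (auto simp: occurrences_def)
    then have "pcount z s * pcount w z = (\<Sum>A\<in>?S. if order_iso (subword w A) z then pcount z s else 0)"
      by (simp add: pcount_eq_card_occurrences sum_if_card finite_subset[of _ "Pow {..<m+1}"])
    also have "\<dots> = (\<Sum>A\<in>?S. ?t A z)"
      by (rule sum.cong) (auto simp: pcount_order_iso_cong)
    finally show ?thesis .
  qed
  then have "(\<Sum>z\<in>?Z. pcount z s * pcount w z) = (\<Sum>z\<in>?Z. \<Sum>A\<in>?S. ?t A z)"
    by (rule sum.cong[OF refl])
  also have "\<dots> = (\<Sum>A\<in>?S. \<Sum>z\<in>?Z. ?t A z)"
    by (rule sum.swap)
  also have "\<dots> = (\<Sum>A\<in>?S. pcount (subword w A) s)"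
  proof (rule sum.cong[OF refl])
    fix A assume A: "A \<in> ?S"
    then have "A \<subseteq> {..<length w}" "finite A" using assms(2) finite_subset by auto
    then have "card {z \<in> perms. order_iso (subword w A) z} = 1"
      using assms(1) by (intro card_perms_order_iso distinct_subword)
    moreover have "{z \<in> ?Z. order_iso (subword w A) z} = {z \<in> perms. order_iso (subword w A) z}"
      using A \<open>finite A\<close> by (auto simp: order_iso_def length_subword)
    ultimately show "(\<Sum>z\<in>?Z. ?t A z) = pcount (subword w A) s"
      by (simp add: sum_if_card finite_perms_length_eq)
  qed
  finally show ?thesis .
qed

(* Double counting: an occurrence C of s lies in m + 1 - |s| of the m-sets of positions. *)
lemma sum_pcount_subwords:
  assumes "length w = m + 1"
  shows "(\<Sum>A\<in>{A. A \<subseteq> {..<m+1} \<and> card A = m}. pcount (subword w A) s) = (m + 1 - length s) * pcount w s"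
proof -
  let ?S = "{A. A \<subseteq> {..<m+1} \<and> card A = m}"
  let ?O = "occurrences w s"
  have fin_S: "finite ?S" by (rule finite_subset[of _ "Pow {..<m+1}"]) auto
  have "(\<Sum>A\<in>?S. pcount (subword w A) s) = (\<Sum>A\<in>?S. \<Sum>C\<in>?O. if C \<subseteq> A then 1 else 0)"
    using assms by (intro sum.cong) (auto simp: pcount_subword sum_if_card finite_occurrences)
  also have "\<dots> = (\<Sum>C\<in>?O. \<Sum>A\<in>?S. if C \<subseteq> A then 1 else 0)"
    by (rule sum.swap)
  also have "\<dots> = (\<Sum>C\<in>?O. m + 1 - length s)"
  proof (rule sum.cong[OF refl])
    fix C assume "C \<in> ?O"
    then have "C \<subseteq> {..<m+1}" "card C = length s" using assms by (auto simp: occurrences_def)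
    moreover have "{..<m+1} \<noteq> {}" by auto
    ultimately have "card {A \<in> ?S. C \<subseteq> A} = m + 1 - length s"
      using card_supersets_card_minus_one[of "{..<m+1}" C] by (simp add: conj_assoc)
    then show "(\<Sum>A\<in>?S. if C \<subseteq> A then 1 else 0) = m + 1 - length s"
      using fin_S by (simp add: sum_if_card)
  qed
  also have "\<dots> = (m + 1 - length s) * pcount w s"
    by (simp add: pcount_eq_card_occurrences)
  finally show ?thesis .
qed

section \<open>Powers of H\<close>

(* The vanishing hypothesis lets the sum run over the whole level below w instead of the
   interval [s, w]. *)
lemma iconv_Hfun:
  assumes "w \<in> perms" "\<And>z. z \<in> perms \<Longrightarrow> \<not> pleq s z \<Longrightarrow> F s z = 0"
  shows "iconv F Hfun s w = (\<Sum>z\<in>{z \<in> perms. length z + 1 = length w}. F s z * of_nat (pcount w z))"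
proof -
  have "Hfun z w = (if length z + 1 = length w then of_nat (pcount w z) else 0)" if "pleq z w" for z
    using that by (auto simp: Hfun_def ieta_def covers_def)
  then have "iconv F Hfun s w
      = (\<Sum>z\<in>{z. pleq s z \<and> pleq z w}. if length z + 1 = length w then F s z * of_nat (pcount w z) else 0)"
    unfolding iconv_def by (intro sum.cong) auto
  also have "\<dots> = (\<Sum>z\<in>{z \<in> perms. length z + 1 = length w}. F s z * of_nat (pcount w z))"
  proof (rule sum.mono_neutral_cong)
    show "finite {z. pleq s z \<and> pleq z w}"
      by (rule finite_subset[OF _ finite_perms_length_le[of "length w"]])
        (auto simp: pleq_def dest: pcount_pos_imp_length_le)
    show "finite {z \<in> perms. length z + 1 = length w}"
      by (rule finite_subset[OF _ finite_perms_length_le[of "length w"]]) auto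
  qed (use assms in \<open>auto simp: pleq_def\<close>)
  finally show ?thesis .
qed

lemma ipow_Hfun:
  assumes "s \<in> perms" "w \<in> perms"
  shows "ipow Hfun l s w = (if length w = length s + l then fact l * of_nat (pcount w s) else 0)"
  using assms(2)
proof (induction l arbitrary: w)
  case 0
  then show ?case
    using pcount_same_length_perms[OF assms(1) 0] by (auto simp: idelta_def)
next
  case (Suc l)
  let ?Z = "{z \<in> perms. length z + 1 = length w}"
  have "ipow Hfun l s z = 0" if "z \<in> perms" "\<not> pleq s z" for z
    using that Suc.IH assms(1) by (simp add: pleq_def)
  then have "ipow Hfun (Suc l) s w = (\<Sum>z\<in>?Z. ipow Hfun l s z * of_nat (pcount w z))"
    using iconv_Hfun[OF Suc.prems] by simp
  also have "\<dots> = (\<Sum>z\<in>?Z. if length w = length s + Suc l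
                     then fact l * of_nat (pcount z s * pcount w z) else 0)"
    using Suc.IH by (intro sum.cong) auto
  also have "\<dots> = (if length w = length s + Suc l then fact (Suc l) * of_nat (pcount w s) else 0)"
  proof (cases "length w = length s + Suc l")
    case True
    have "(\<Sum>z\<in>?Z. pcount z s * pcount w z) = (l + 1) * pcount w s"
      using Suc.prems True sum_pcount_perms_eq_sum_subwords[of w "length s + l"]
        sum_pcount_subwords[of w "length s + l"] by (simp add: perms_def)
    then have "(\<Sum>z\<in>?Z. fact l * of_nat (pcount z s * pcount w z))
        = fact l * (of_nat ((l + 1) * pcount w s) :: rat)"
      by (simp only: of_nat_sum[symmetric] sum_distrib_left[symmetric])
    also have "\<dots> = fact (Suc l) * of_nat (pcount w s)"
      by (simp add: algebra_simps)
    finally show ?thesis using True by simp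
  qed simp
  finally show ?case .
qed

theorem mainTheorem4:
  assumes "pleq s w"
  shows "finite {l. ipow Hfun l s w \<noteq> 0} \<and>
         Pfun s w = (\<Sum>l\<in>{l. ipow Hfun l s w \<noteq> 0}. ipow Hfun l s w / fact l)"
proof -
  have s: "s \<in> perms" and w: "w \<in> perms" and pos: "pcount w s > 0"
    using assms by (auto simp: pleq_def)
  define d where "d = length w - length s"
  have "length w = length s + d"
    using pcount_pos_imp_length_le[OF pos] by (simp add: d_def)
  then have "{l. ipow Hfun l s w \<noteq> 0} = {d}" and "ipow Hfun d s w = fact d * of_nat (pcount w s)"
    using pos by (auto simp: ipow_Hfun[OF s w])
  then show ?thesis by (simp add: Pfun_def)
qed

end
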